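(* Let $p>1$, $c\in(0,1]$, $X\subset\mathbb{R}^n$, $f(x)=\mathbb{E}[F(x,\xi)]$, and for $x\in X$, $y\in\mathbb{R}$, $z>0$ let \[ \phi(x,y,z)=\frac{c}{z^{p-1}}\mathbb{E}[(F(x,\xi)-y)_+^p]+y+c(p-1)p^{-\frac p{p-1}}z,\qquad h(x)=f(x)+c\,\mathbb{E}^{1/p}[(F(x,\xi)-f(x))_+^p]. \] Then for any $x\in X$ and $y\in\mathbb{R}$, $\Phi(x,y):=\inf_{z>0}\phi(x,y,z)$ is attained at $z=p^{\frac1{p-1}}\mathbb{E}^{1/p}[(F(x,\xi)-y)_+^p]$. Moreover, for any $x\in X$, $\inf_{y\ge f(x),z>0}\phi(x,y,z)=\inf_{y\ge f(x)}\Phi(x,y)=h(x)$, attained at $y=f(x)$ and $z=p^{\frac1{p-1}}\mathbb{E}^{1/p}[(F(x,\xi)-f(x))_+^p]$.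
   Context: $(a)_+=\max\{a,0\}$; $F(x,\xi)$ has finite $p$-th moment for each $x$. *)

theory Defs
  imports "HOL-Probability.Probability"
begin

definition pos_part :: "real \<Rightarrow> real" where
  "pos_part a = max a 0"

definition upmom :: "'b measure \<Rightarrow> ('a \<Rightarrow> 'b \<Rightarrow> real) \<Rightarrow> real \<Rightarrow> 'a \<Rightarrow> real \<Rightarrow> real" where
  "upmom M F p x y = (\<integral>\<xi>. (pos_part (F x \<xi> - y)) powr p \<partial>M)"

definition fexp :: "'b measure \<Rightarrow> ('a \<Rightarrow> 'b \<Rightarrow> real) \<Rightarrow> 'a \<Rightarrow> real" where
  "fexp M F x = (\<integral>\<xi>. F x \<xi> \<partial>M)"

definition phi :: "'b measure \<Rightarrow> ('a \<Rightarrow> 'b \<Rightarrow> real) \<Rightarrow> real \<Rightarrow> real \<Rightarrow> 'a \<Rightarrow> real \<Rightarrow> real \<Rightarrow> real" where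
  "phi M F p c x y z =
     c / (z powr (p - 1)) * upmom M F p x y + y + c * (p - 1) * p powr (- p / (p - 1)) * z"

definition Phi :: "'b measure \<Rightarrow> ('a \<Rightarrow> 'b \<Rightarrow> real) \<Rightarrow> real \<Rightarrow> real \<Rightarrow> 'a \<Rightarrow> real \<Rightarrow> real" where
  "Phi M F p c x y = (INF z\<in>{0<..}. phi M F p c x y z)"

definition hfun :: "'b measure \<Rightarrow> ('a \<Rightarrow> 'b \<Rightarrow> real) \<Rightarrow> real \<Rightarrow> real \<Rightarrow> 'a \<Rightarrow> real" where
  "hfun M F p c x = fexp M F x + c * (upmom M F p x (fexp M F x)) powr (1 / p)"

definition zopt :: "'b measure \<Rightarrow> ('a \<Rightarrow> 'b \<Rightarrow> real) \<Rightarrow> real \<Rightarrow> 'a \<Rightarrow> real \<Rightarrow> real" where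
  "zopt M F p x y = p powr (1 / (p - 1)) * (upmom M F p x y) powr (1 / p)"

end

(* For fixed x and y write U = E[(F(x,xi) - y)_+^p]. Substituting z = s p^(1/(p-1)) U^(1/p)
   turns phi(x,y,z) - y into (c U^(1/p) / p) (s^(1-p) + (p-1) s), and by Bernoulli's inequality
   s^(1-p) + (p-1) s >= p with equality at s = 1; hence Phi(x,y) = y + c ||(F(x,xi) - y)_+||_p.
   For y <= y' we have (F - y)_+ <= (F - y')_+ + (y' - y), so by Minkowski's inequality
   y |-> ||(F - y)_+||_p is 1-Lipschitz. With c <= 1 the map y |-> Phi(x,y) is therefore
   nondecreasing, and its infimum over y >= f(x) is taken at y = f(x). *)

theory Submission
  imports Defs
begin

lemma powr_one_minus_add_ge:
  fixes s p :: real
  assumes "s > 0" "p \<ge> 1"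
  shows "p \<le> s powr (1 - p) + (p - 1) * s"
proof -
  have "1 + (1 - p) * ln s \<le> exp ((1 - p) * ln s)"
    by (rule exp_ge_add_one_self)
  also have "\<dots> = s powr (1 - p)"
    using assms by (simp add: powr_def)
  finally have "1 + (1 - p) * ln s \<le> s powr (1 - p)" .
  moreover have "(1 - p) * (s - 1) \<le> (1 - p) * ln s"
    using assms by (intro mult_left_mono_neg ln_le_minus_one) auto
  ultimately show ?thesis
    by (simp add: algebra_simps)
qed

lemma objective_rescaled:
  fixes a s p c :: real
  assumes "p > 1" "a > 0" "s > 0"
  defines "z \<equiv> s * (p powr (1 / (p - 1)) * a)"
  shows "c / z powr (p - 1) * a powr p + c * (p - 1) * p powr (- p / (p - 1)) * z
       = c * a * (s powr (1 - p) + (p - 1) * s) / p"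
proof -
  have "z powr (p - 1) = s powr (p - 1) * p * a powr (p - 1)"
    using assms by (simp add: z_def powr_mult powr_powr)
  moreover have "a powr p = a * a powr (p - 1)"
    using assms by (simp add: powr_mult_base)
  moreover have "s powr (1 - p) = 1 / s powr (p - 1)"
    using assms by (simp add: powr_diff)
  moreover have "p powr (- p / (p - 1)) * p powr (1 / (p - 1)) = 1 / p"
  proof -
    have "- p / (p - 1) + 1 / (p - 1) = -1"
      using assms by (simp add: field_simps)
    then have "p powr (- p / (p - 1)) * p powr (1 / (p - 1)) = p powr -1"
      by (simp only: powr_add[symmetric])
    then show ?thesis
      using assms by (simp add: powr_minus divide_inverse)
  qed
  ultimately show ?thesis
    using assms by (simp add: z_def powr_minus field_simps)
qed

lemma objective_ge:
  fixes U y c p z :: real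
  assumes "U \<ge> 0" "p > 1" "c > 0" "z > 0"
  shows "y + c * U powr (1 / p)
    \<le> c / z powr (p - 1) * U + y + c * (p - 1) * p powr (- p / (p - 1)) * z"
proof (cases "U = 0")
  case True
  then show ?thesis
    using assms by simp
next
  case False
  define a where "a = U powr (1 / p)"
  then have a: "a > 0" "U = a powr p"
    using False assms by (auto simp: powr_powr)
  define s where "s = z / (p powr (1 / (p - 1)) * a)"
  then have s: "s > 0" "z = s * (p powr (1 / (p - 1)) * a)"
    using a assms by auto
  have "c * a = c * a * p / p"
    using assms by simp
  also have "\<dots> \<le> c * a * (s powr (1 - p) + (p - 1) * s) / p"
    using powr_one_minus_add_ge[of s p] s a assms
    by (intro divide_right_mono mult_left_mono) auto
  also have "\<dots> = c / z powr (p - 1) * U + c * (p - 1) * p powr (- p / (p - 1)) * z"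
    using objective_rescaled[of p a s c] s a assms by simp
  finally show ?thesis
    by (simp add: a_def)
qed

lemma objective_at_minimizer:
  fixes U y c p :: real
  assumes "U \<ge> 0" "p > 1" "c > 0"
  defines "z \<equiv> p powr (1 / (p - 1)) * U powr (1 / p)"
  shows "c / z powr (p - 1) * U + y + c * (p - 1) * p powr (- p / (p - 1)) * z
    = y + c * U powr (1 / p)"
proof (cases "U = 0")
  case True
  \<comment> \<open>Here z = 0 lies outside {0<..}; the identity survives only because 0 powr _ = 0.\<close>
  then show ?thesis
    by (simp add: z_def)
next
  case False
  define a where "a = U powr (1 / p)"
  then have "a > 0" and U: "U = a powr p"
    using False assms by (auto simp: powr_powr)
  then have "c / (p powr (1 / (p - 1)) * a) powr (p - 1) * a powr p
      + c * (p - 1) * p powr (- p / (p - 1)) * (p powr (1 / (p - 1)) * a) = c * a"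
    using objective_rescaled[of p a 1 c] assms by simp
  then show ?thesis
    unfolding z_def a_def[symmetric] unfolding U by simp
qed

lemma INF_objective:
  fixes U y c p :: real
  assumes "U \<ge> 0" "p > 1" "c > 0"
  shows "(INF z\<in>{0<..}. c / z powr (p - 1) * U + y + c * (p - 1) * p powr (- p / (p - 1)) * z)
    = y + c * U powr (1 / p)"
    (is "(INF z\<in>{0<..}. ?g z) = ?m")
proof (rule cInf_eq_non_empty)
  show "?g ` {0<..} \<noteq> {}"
    by auto
  show "\<And>v. v \<in> ?g ` {0<..} \<Longrightarrow> ?m \<le> v"
    using objective_ge[OF assms] by auto
  fix b
  assume lower: "\<And>v. v \<in> ?g ` {0<..} \<Longrightarrow> b \<le> v"
  show "b \<le> ?m"
  proof (cases "U = 0")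
    case True
    define K where "K = c * (p - 1) * p powr (- p / (p - 1))"
    have "K > 0"
      using assms by (simp add: K_def)
    show ?thesis
    proof (rule field_le_epsilon)
      fix e :: real
      assume "e > 0"
      then have "b \<le> ?g (e / K)"
        using \<open>K > 0\<close> by (intro lower imageI) auto
      moreover have "?g (e / K) = y + e"
        using True \<open>K > 0\<close> unfolding K_def[symmetric] by simp
      ultimately show "b \<le> ?m + e"
        using True by simp
    qed
  next
    case False
    then have "p powr (1 / (p - 1)) * U powr (1 / p) > 0"
      using assms by simp
    then have "b \<le> ?g (p powr (1 / (p - 1)) * U powr (1 / p))"
      by (intro lower imageI) auto
    then show ?thesis
      using objective_at_minimizer[OF assms] by simp
  qed
qed

lemma powr_add_le_weighted:
  fixes a b t p :: real
  assumes "0 \<le> a" "0 \<le> b" "0 < t" "t < 1" "p \<ge> 1"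
  shows "(a + b) powr p \<le> t powr (1 - p) * a powr p + (1 - t) powr (1 - p) * b powr p"
proof -
  have weight_ge_1: "1 \<le> u powr (1 - p)" if "0 < u" "u < 1" for u :: real
  proof -
    have "u powr (p - 1) \<le> 1"
      using that assms by (intro powr_le1) auto
    then show ?thesis
      using that by (simp add: powr_diff)
  qed
  consider "a = 0" | "b = 0" | "a > 0" "b > 0"
    using assms by linarith
  then show ?thesis
  proof cases
    case 1
    then show ?thesis
      using weight_ge_1[of "1 - t"] assms by (simp add: mult_le_cancel_right1)
  next
    case 2
    then show ?thesis
      using weight_ge_1[of t] assms by (simp add: mult_le_cancel_right1)
  next
    case 3
    have "(a + b) powr p = (t *\<^sub>R (a / t) + (1 - t) *\<^sub>R (b / (1 - t))) powr p"
      using assms by simp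
    also have "\<dots> \<le> t * (a / t) powr p + (1 - t) * (b / (1 - t)) powr p"
      using convex_onD[OF powr_convex[OF assms(5)], of "1 - t" "a / t" "b / (1 - t)"] 3 assms
      by simp
    also have "\<dots> = t powr (1 - p) * a powr p + (1 - t) powr (1 - p) * b powr p"
      using 3 assms by (simp add: powr_divide powr_diff field_simps)
    finally show ?thesis .
  qed
qed

lemma powr_add_eq_weighted:
  fixes a b p :: real
  assumes "a > 0" "b > 0"
  shows "(a / (a + b)) powr (1 - p) * a powr p + (b / (a + b)) powr (1 - p) * b powr p
    = (a + b) powr p"
proof -
  have "(u / (a + b)) powr (1 - p) * u powr p = u * (a + b) powr (p - 1)" if "u > 0" for u
    using that assms by (simp add: powr_divide powr_diff divide_simps)
  then show ?thesis
    using assms by (simp add: powr_mult_base flip: distrib_right)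
qed

lemma integrable_pos_part_powr:
  assumes "prob_space M" "p \<ge> 1" "G \<in> borel_measurable M"
    and "integrable M (\<lambda>\<xi>. \<bar>G \<xi>\<bar> powr p)"
  shows "integrable M (\<lambda>\<xi>. pos_part (G \<xi> - y) powr p)"
proof (rule Bochner_Integration.integrable_bound)
  interpret prob_space M by fact
  show "integrable M (\<lambda>\<xi>. 2 powr (p - 1) * (\<bar>G \<xi>\<bar> powr p + \<bar>y\<bar> powr p))"
    using assms(4) by auto
  show "(\<lambda>\<xi>. pos_part (G \<xi> - y) powr p) \<in> borel_measurable M"
    using assms(3) unfolding pos_part_def by measurable
  show "AE \<xi> in M. norm (pos_part (G \<xi> - y) powr p)
      \<le> norm (2 powr (p - 1) * (\<bar>G \<xi>\<bar> powr p + \<bar>y\<bar> powr p))"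
  proof (rule AE_I2)
    fix \<xi>
    have "pos_part (G \<xi> - y) powr p \<le> (\<bar>G \<xi>\<bar> + \<bar>y\<bar>) powr p"
      using assms by (intro powr_mono2) (auto simp: pos_part_def)
    also have "\<dots> \<le> (1/2) powr (1 - p) * \<bar>G \<xi>\<bar> powr p + (1 - 1/2) powr (1 - p) * \<bar>y\<bar> powr p"
      using assms by (intro powr_add_le_weighted) auto
    also have "\<dots> = 2 powr (p - 1) * (\<bar>G \<xi>\<bar> powr p + \<bar>y\<bar> powr p)"
      by (simp add: powr_divide powr_diff algebra_simps)
    finally show "norm (pos_part (G \<xi> - y) powr p)
        \<le> norm (2 powr (p - 1) * (\<bar>G \<xi>\<bar> powr p + \<bar>y\<bar> powr p))"
      by simp
  qed
qed

lemma Minkowski_add_const: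
  fixes f g :: "'a \<Rightarrow> real" and p d :: real
  assumes "prob_space M" "p \<ge> 1" "d \<ge> 0"
    and "\<And>\<xi>. 0 \<le> f \<xi>" "\<And>\<xi>. 0 \<le> g \<xi>" "\<And>\<xi>. f \<xi> \<le> g \<xi> + d"
    and "integrable M (\<lambda>\<xi>. f \<xi> powr p)" "integrable M (\<lambda>\<xi>. g \<xi> powr p)"
  shows "(\<integral>\<xi>. f \<xi> powr p \<partial>M) powr (1 / p) \<le> (\<integral>\<xi>. g \<xi> powr p \<partial>M) powr (1 / p) + d"
proof -
  interpret prob_space M by fact
  define A where "A = (\<integral>\<xi>. g \<xi> powr p \<partial>M) powr (1 / p)"
  have "A \<ge> 0"
    unfolding A_def by (rule powr_ge_zero)
  have A_powr: "A powr p = (\<integral>\<xi>. g \<xi> powr p \<partial>M)"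
    using assms(2) by (simp add: A_def powr_powr)
  have f_powr_le: "f \<xi> powr p \<le> (g \<xi> + d) powr p" for \<xi>
    using assms by (intro powr_mono2) auto
  have "(\<integral>\<xi>. f \<xi> powr p \<partial>M) \<le> (A + d) powr p"
  proof -
    consider "d = 0" | "A = 0" "d > 0" | "A > 0" "d > 0"
      using \<open>A \<ge> 0\<close> assms(3) by linarith
    then show ?thesis
    proof cases
      case 1
      then show ?thesis
        using f_powr_le assms(7,8) by (simp add: A_powr integral_mono)
    next
      case 2
      have "(\<integral>\<xi>. g \<xi> powr p \<partial>M) = 0"
        using 2 A_powr assms(2) by simp
      then have "AE \<xi> in M. g \<xi> powr p = 0"
        using assms(8) by (subst (asm) integral_nonneg_eq_0_iff_AE) auto
      moreover have "f \<xi> powr p \<le> d powr p" if "g \<xi> powr p = 0" for \<xi>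
        using f_powr_le[of \<xi>] that by simp
      ultimately have "AE \<xi> in M. f \<xi> powr p \<le> d powr p"
        by (rule eventually_mono)
      then have "(\<integral>\<xi>. f \<xi> powr p \<partial>M) \<le> (\<integral>\<xi>. d powr p \<partial>M)"
        using assms(7) by (intro integral_mono_AE) auto
      then show ?thesis
        using 2 by (simp add: prob_space)
    next
      case 3
      \<comment> \<open>The weight that makes the convexity bound an equality (powr_add_eq_weighted).\<close>
      define t where "t = A / (A + d)"
      have t: "0 < t" "t < 1" "1 - t = d / (A + d)"
        using 3 by (auto simp: t_def field_simps)
      have "(\<integral>\<xi>. f \<xi> powr p \<partial>M)
          \<le> (\<integral>\<xi>. t powr (1 - p) * g \<xi> powr p + (1 - t) powr (1 - p) * d powr p \<partial>M)"
        using assms t f_powr_le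
        by (intro integral_mono order.trans[OF f_powr_le powr_add_le_weighted]) auto
      also have "\<dots> = t powr (1 - p) * A powr p + (1 - t) powr (1 - p) * d powr p"
        using assms(8) by (simp add: A_powr prob_space)
      also have "\<dots> = (A + d) powr p"
        unfolding t(3) unfolding t_def by (rule powr_add_eq_weighted[OF 3])
      finally show ?thesis .
    qed
  qed
  then have "(\<integral>\<xi>. f \<xi> powr p \<partial>M) powr (1 / p) \<le> ((A + d) powr p) powr (1 / p)"
    using assms(2,4) by (intro powr_mono2) auto
  also have "\<dots> = A + d"
    using \<open>A \<ge> 0\<close> assms(2,3) by (simp add: powr_powr)
  finally show ?thesis
    by (simp add: A_def)
qed

lemma upmom_nonneg: "upmom M F p x y \<ge> 0"
  unfolding upmom_def by (rule Bochner_Integration.integral_nonneg) simp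

lemma Phi_eq:
  assumes "p > 1" "c > 0"
  shows "Phi M F p c x y = y + c * upmom M F p x y powr (1 / p)"
  unfolding Phi_def phi_def by (rule INF_objective[OF upmom_nonneg assms])

lemma phi_zopt:
  assumes "p > 1" "c > 0"
  shows "phi M F p c x y (zopt M F p x y) = Phi M F p c x y"
  unfolding Phi_eq[OF assms] phi_def zopt_def
  by (rule objective_at_minimizer[OF upmom_nonneg assms])

lemma Phi_le_phi:
  assumes "p > 1" "c > 0" "z > 0"
  shows "Phi M F p c x y \<le> phi M F p c x y z"
  unfolding Phi_eq[OF assms(1,2)] phi_def
  by (rule objective_ge[OF upmom_nonneg assms])

lemma upmom_root_le:
  assumes "prob_space M" "p \<ge> 1" "F x \<in> borel_measurable M"
    and "integrable M (\<lambda>\<xi>. \<bar>F x \<xi>\<bar> powr p)" "y \<le> y'"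
  shows "upmom M F p x y powr (1 / p) \<le> upmom M F p x y' powr (1 / p) + (y' - y)"
  unfolding upmom_def
  using assms by (intro Minkowski_add_const integrable_pos_part_powr) (auto simp: pos_part_def)

lemma Phi_mono:
  assumes "prob_space M" "p > 1" "c > 0" "c \<le> 1" "F x \<in> borel_measurable M"
    and "integrable M (\<lambda>\<xi>. \<bar>F x \<xi>\<bar> powr p)" "y \<le> y'"
  shows "Phi M F p c x y \<le> Phi M F p c x y'"
proof -
  have "c * upmom M F p x y powr (1 / p) \<le> c * (upmom M F p x y' powr (1 / p) + (y' - y))"
    using upmom_root_le[of M p F x y y'] assms by (intro mult_left_mono) auto
  also have "\<dots> \<le> c * upmom M F p x y' powr (1 / p) + (y' - y)"
    using assms by (simp add: distrib_left mult_left_le_one_le)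
  finally show ?thesis
    unfolding Phi_eq[OF assms(2,3)] by simp
qed

lemma INF_Phi_atLeast:
  assumes "prob_space M" "p > 1" "c > 0" "c \<le> 1" "F x \<in> borel_measurable M"
    and "integrable M (\<lambda>\<xi>. \<bar>F x \<xi>\<bar> powr p)"
  shows "(INF y\<in>{y\<^sub>0..}. Phi M F p c x y) = Phi M F p c x y\<^sub>0"
  using Phi_mono[where F = F and x = x, OF assms] by (intro cInf_eq_minimum) auto

lemma INF_phi_eq_Phi:
  assumes "prob_space M" "p > 1" "c > 0" "c \<le> 1" "F x \<in> borel_measurable M"
    and "integrable M (\<lambda>\<xi>. \<bar>F x \<xi>\<bar> powr p)"
  shows "(INF yz\<in>{(y, z). y \<ge> y\<^sub>0 \<and> z > 0}. phi M F p c x (fst yz) (snd yz))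
    = Phi M F p c x y\<^sub>0"
    (is "(INF yz\<in>?S. ?phi yz) = _")
proof (rule antisym)
  have lower: "Phi M F p c x y\<^sub>0 \<le> phi M F p c x y z" if "(y, z) \<in> ?S" for y z
  proof -
    have "Phi M F p c x y\<^sub>0 \<le> Phi M F p c x y"
      using that by (intro Phi_mono[where F = F and x = x, OF assms]) simp
    also have "\<dots> \<le> phi M F p c x y z"
      using that assms(2,3) by (intro Phi_le_phi) simp_all
    finally show ?thesis .
  qed
  then show "Phi M F p c x y\<^sub>0 \<le> (INF yz\<in>?S. ?phi yz)"
    by (intro cINF_greatest) (auto intro: exI[of _ "1::real"])
  have "bdd_below (?phi ` ?S)"
    using lower by (intro bdd_belowI2[where m = "Phi M F p c x y\<^sub>0"]) auto
  then have "(INF yz\<in>?S. ?phi yz) \<le> phi M F p c x y\<^sub>0 z" if "z > 0" for z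
    using cINF_lower[where x = "(y\<^sub>0, z)"] that by fastforce
  then show "(INF yz\<in>?S. ?phi yz) \<le> Phi M F p c x y\<^sub>0"
    unfolding Phi_def by (intro cINF_greatest) auto
qed

theorem lemma13:
  fixes M :: "'b measure" and F :: "real ^ 'n \<Rightarrow> 'b \<Rightarrow> real"
    and X :: "(real ^ 'n) set" and p c :: real
  assumes "prob_space M"
    and "p > 1" and "c > 0" and "c \<le> 1"
    and "\<And>x. x \<in> X \<Longrightarrow> F x \<in> borel_measurable M"
    and "\<And>x. x \<in> X \<Longrightarrow> integrable M (\<lambda>\<xi>. \<bar>F x \<xi>\<bar> powr p)"
  shows
    "(\<forall>x\<in>X. \<forall>y::real.
        Phi M F p c x y = phi M F p c x y (zopt M F p x y)
        \<and> (upmom M F p x y > 0 \<longrightarrow> zopt M F p x y > 0))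
     \<and> (\<forall>x\<in>X.
        (INF yz\<in>{(y, z). y \<ge> fexp M F x \<and> z > 0}. phi M F p c x (fst yz) (snd yz)) = hfun M F p c x
        \<and> (INF y\<in>{fexp M F x..}. Phi M F p c x y) = hfun M F p c x
        \<and> Phi M F p c x (fexp M F x) = hfun M F p c x
        \<and> phi M F p c x (fexp M F x) (zopt M F p x (fexp M F x)) = hfun M F p c x)"
proof (intro conjI ballI allI impI)
  fix x y
  show "Phi M F p c x y = phi M F p c x y (zopt M F p x y)"
    by (rule phi_zopt[OF assms(2,3), symmetric])
  assume "upmom M F p x y > 0"
  then show "zopt M F p x y > 0"
    using assms(2) by (simp add: zopt_def)
next
  fix x
  assume "x \<in> X"
  note hyps = assms(1-4) assms(5,6)[OF \<open>x \<in> X\<close>]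
  have h_eq: "hfun M F p c x = Phi M F p c x (fexp M F x)"
    unfolding hfun_def Phi_eq[OF assms(2,3)] ..
  show "(INF yz\<in>{(y, z). y \<ge> fexp M F x \<and> z > 0}. phi M F p c x (fst yz) (snd yz))
      = hfun M F p c x"
    using INF_phi_eq_Phi[where F = F and x = x, OF hyps] h_eq by simp
  show "(INF y\<in>{fexp M F x..}. Phi M F p c x y) = hfun M F p c x"
    using INF_Phi_atLeast[where F = F and x = x, OF hyps] h_eq by simp
  show "Phi M F p c x (fexp M F x) = hfun M F p c x"
    using h_eq by simp
  show "phi M F p c x (fexp M F x) (zopt M F p x (fexp M F x)) = hfun M F p c x"
    by (simp add: phi_zopt[OF assms(2,3)] h_eq)
qed

end
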